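(* There exists $n_0$ such that for every $n \ge n_0$, every linear subspace $\mathcal{F}$ of $\{0,1\}^n = \mathbb{F}_2^n$ of dimension at least $0.44n$ contains a focal family of size $4$.
   Context: A family $x^{(0)}, x^{(1)}, x^{(2)}, x^{(3)}$ of $4$ distinct vectors in $\{0,1\}^n$ is focal (with focus $x^{(0)}$) if for every coordinate $i \in [n]$, at least $2$ of the $3$ entries $x^{(1)}_i, x^{(2)}_i, x^{(3)}_i$ are equal to $x^{(0)}_i$. $\mathcal{F}$ contains a focal family of size $4$ if some $4$ distinct members of $\mathcal{F}$, with some choice of focus among them, form a focal family. *)

theory Defs
  imports Complex_Main "HOL-Library.Z2" "HOL-Library.Function_Algebras"
begin

text \<open>Vectors of F_2^n are represented as functions nat => bit vanishing outside {0..<n}.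
  The space nat => bit is a vector space over the field bit (= F_2) with pointwise operations.\<close>

definition cube :: "nat \<Rightarrow> (nat \<Rightarrow> bit) set" where
  "cube n = {x. \<forall>i\<ge>n. x i = 0}"

global_interpretation f2: vector_space "\<lambda>(c::bit) (x::nat \<Rightarrow> bit). (\<lambda>i. c * x i)"
  by unfold_locales (rule ext; simp only: plus_fun_def distrib_left distrib_right mult.assoc mult_1_left)+

definition focal :: "nat \<Rightarrow> (nat \<Rightarrow> nat \<Rightarrow> bit) \<Rightarrow> bool" where
  "focal n x \<longleftrightarrow> inj_on x {0..3} \<and>
     (\<forall>i<n. card {j \<in> {1,2,3}. x j i = x 0 i} \<ge> 2)"

definition contains_focal4 :: "nat \<Rightarrow> (nat \<Rightarrow> bit) set \<Rightarrow> bool" where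
  "contains_focal4 n F \<longleftrightarrow> (\<exists>x. x ` {0..3} \<subseteq> F \<and> focal n x)"

end

(*
  A linear code F without a focal family of size 4 has no three nonzero codewords with pairwise
  disjoint supports: together with the zero word they would form a focal family with focus 0.
  Let y be a nonzero codeword of minimum weight d.

  If d >= 0.2135 n we use the linear programming bound in the Fourier-analytic form of Navon and
  Samorodnitsky: a nonnegative f on the cube with A f >= theta f, where A is the adjacency
  operator and theta >= n - 2d + 1, gives |F| <= 2d |supp f|.  The test function
  f(x) = alpha^|x| * bump(|x|), with bump a parabola on a window of constant width above
  radius n/11, yields log2 |F| <= H(1/11) n + o(n) < 0.44 n.

  If d < 0.2135 n we shorten F on supp y, so |F| <= 2^d |K| for the shortened code K.  If y2 is a
  nonzero word of minimum weight in K, every nonzero codeword meets supp y or supp y2, so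
  dim F <= d + wt y2; hence K is a code of length n - d and minimum distance >= 0.44 n - d, and
  the same bound with radius (n - d)/20 gives log2 |F| <= d + H(1/20) (n - d) + o(n) < 0.44 n.
*)

theory Submission
  imports Defs "HOL-Analysis.Convex" "HOL-Real_Asymp.Real_Asymp"
begin

section \<open>Fourier analysis on the Boolean cube\<close>

definition walsh :: "'a set \<Rightarrow> 'a set \<Rightarrow> real" where
  "walsh u x = (-1) ^ card (u \<inter> x)"

lemma walsh_commute: "walsh u x = walsh x u"
  by (simp add: walsh_def Int_commute)

lemma walsh_empty [simp]: "walsh {} x = 1" "walsh u {} = 1"
  by (simp_all add: walsh_def)

lemma walsh_cases: "walsh u x = 1 \<or> walsh u x = -1"
  by (simp add: walsh_def) (metis neg_one_even_power neg_one_odd_power)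

lemma walsh_singleton: "i \<in> u \<Longrightarrow> walsh u {i} = -1"
  by (simp add: walsh_def Int_absorb1)

lemma walsh_sym_diff:
  assumes "finite u"
  shows "walsh u (sym_diff x y) = walsh u x * walsh u y"
proof -
  have card_x: "card (u \<inter> x) = card (u \<inter> x \<inter> y) + card (u \<inter> x - y)"
    and card_y: "card (u \<inter> y) = card (u \<inter> x \<inter> y) + card (u \<inter> y - x)"
    and card_xy: "card (u \<inter> sym_diff x y) = card (u \<inter> x - y) + card (u \<inter> y - x)"
    using assms by (subst card_Un_disjoint[symmetric]; auto intro: arg_cong[where f=card])+
  show ?thesis
    unfolding walsh_def card_x card_y card_xy by (simp add: power_add flip: power_mult_distrib)
qed

lemma sym_diff_sym_diff_cancel: "sym_diff (sym_diff x y) y = x"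
  by blast

lemma sym_diff_swap: "sym_diff (sym_diff x y) z = sym_diff (sym_diff x z) y"
  by blast

lemma sum_Pow_sym_diff:
  assumes "y \<subseteq> I"
  shows "(\<Sum>x\<in>Pow I. h (sym_diff x y)) = (\<Sum>x\<in>Pow I. h x)"
  by (rule sum.reindex_bij_witness[where i="\<lambda>x. sym_diff x y" and j="\<lambda>x. sym_diff x y"])
     (use assms in auto)

lemma sum_walsh:
  assumes "finite I" "u \<subseteq> I"
  shows "(\<Sum>x\<in>Pow I. walsh u x) = (if u = {} then 2 ^ card I else 0)"
proof (cases "u = {}")
  case True
  then show ?thesis using assms(1) by (simp add: card_Pow)
next
  case False
  then obtain i where i: "i \<in> u" by blast
  have "(\<Sum>x\<in>Pow I. walsh u x) = (\<Sum>x\<in>Pow I. walsh u (sym_diff x {i}))"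
    using i assms(2) by (intro sum_Pow_sym_diff[symmetric]) auto
  also have "\<dots> = - (\<Sum>x\<in>Pow I. walsh u x)"
    using i finite_subset[OF assms(2,1)]
    by (simp add: walsh_sym_diff walsh_singleton sum_negf)
  finally show ?thesis using False by simp
qed

lemma sum_walsh_dual:
  assumes "finite I" "x \<subseteq> I"
  shows "(\<Sum>u\<in>Pow I. walsh u x) = (if x = {} then 2 ^ card I else 0)"
  using sum_walsh[OF assms] by (simp add: walsh_commute[of _ x])

lemma walsh_orthogonal:
  assumes "finite I" "u \<subseteq> I" "v \<subseteq> I"
  shows "(\<Sum>x\<in>Pow I. walsh u x * walsh v x) = (if u = v then 2 ^ card I else 0)"
proof -
  have "(\<Sum>x\<in>Pow I. walsh u x * walsh v x) = (\<Sum>x\<in>Pow I. walsh (sym_diff u v) x)"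
  proof (intro sum.cong refl)
    fix x assume "x \<in> Pow I"
    then have "finite x" using assms(1) by (auto intro: finite_subset)
    then show "walsh u x * walsh v x = walsh (sym_diff u v) x"
      by (simp add: walsh_commute[of _ x] walsh_sym_diff)
  qed
  also have "\<dots> = (if u = v then 2 ^ card I else 0)"
    using assms by (subst sum_walsh) auto
  finally show ?thesis .
qed

definition fourier :: "'a set \<Rightarrow> ('a set \<Rightarrow> real) \<Rightarrow> 'a set \<Rightarrow> real" where
  "fourier I g u = (\<Sum>x\<in>Pow I. g x * walsh u x)"

lemma fourier_empty: "fourier I g {} = (\<Sum>x\<in>Pow I. g x)"
  by (simp add: fourier_def)

lemma sum_autocorrelation:
  assumes I: "finite I" and t: "t \<subseteq> I"
  shows "(\<Sum>x\<in>Pow I. g x * g (sym_diff x t)) = (\<Sum>u\<in>Pow I. (fourier I g u)\<^sup>2 * walsh u t) / 2 ^ card I"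
proof -
  have "(\<Sum>u\<in>Pow I. (fourier I g u)\<^sup>2 * walsh u t)
      = (\<Sum>u\<in>Pow I. \<Sum>x\<in>Pow I. \<Sum>y\<in>Pow I. g x * g y * (walsh u x * walsh u y * walsh u t))"
  proof (intro sum.cong refl)
    fix u
    show "(fourier I g u)\<^sup>2 * walsh u t
        = (\<Sum>x\<in>Pow I. \<Sum>y\<in>Pow I. g x * g y * (walsh u x * walsh u y * walsh u t))"
      unfolding fourier_def power2_eq_square sum_product unfolding sum_distrib_right
      by (intro sum.cong refl) (simp add: mult_ac)
  qed
  also have "\<dots> = (\<Sum>x\<in>Pow I. \<Sum>u\<in>Pow I. \<Sum>y\<in>Pow I. g x * g y * (walsh u x * walsh u y * walsh u t))"
    by (rule sum.swap)
  also have "\<dots> = (\<Sum>x\<in>Pow I. \<Sum>y\<in>Pow I. \<Sum>u\<in>Pow I. g x * g y * (walsh u x * walsh u y * walsh u t))"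
    by (rule sum.cong[OF refl]) (rule sum.swap)
  also have "\<dots> = (\<Sum>x\<in>Pow I. \<Sum>y\<in>Pow I. g x * g y * (\<Sum>u\<in>Pow I. walsh u (sym_diff (sym_diff x y) t)))"
    using I by (intro sum.cong refl) (simp add: sum_distrib_left walsh_sym_diff finite_subset)
  also have "\<dots> = (\<Sum>x\<in>Pow I. \<Sum>y\<in>Pow I. g x * g y * (if y = sym_diff x t then 2 ^ card I else 0))"
  proof (intro sum.cong refl)
    fix x y assume "x \<in> Pow I" "y \<in> Pow I"
    then have "sym_diff (sym_diff x y) t \<subseteq> I" using t by auto
    moreover have "sym_diff (sym_diff x y) t = {} \<longleftrightarrow> y = sym_diff x t" by auto
    ultimately show "g x * g y * (\<Sum>u\<in>Pow I. walsh u (sym_diff (sym_diff x y) t))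
        = g x * g y * (if y = sym_diff x t then 2 ^ card I else 0)"
      by (simp add: sum_walsh_dual[OF I])
  qed
  also have "\<dots> = (\<Sum>x\<in>Pow I. g x * g (sym_diff x t) * 2 ^ card I)"
    using I t by (intro sum.cong refl) (auto simp: if_distrib[of "\<lambda>z. _ * z"] sum.delta cong: if_cong)
  finally show ?thesis by (simp add: sum_distrib_right[symmetric])
qed

lemma parseval:
  assumes "finite I"
  shows "(\<Sum>x\<in>Pow I. (g x)\<^sup>2) = (\<Sum>u\<in>Pow I. (fourier I g u)\<^sup>2) / 2 ^ card I"
  using sum_autocorrelation[OF assms, of "{}" g] by (simp add: power2_eq_square)

lemma sum_walsh_singletons:
  assumes "finite I" "u \<subseteq> I"
  shows "(\<Sum>i\<in>I. walsh u {i}) = real (card I) - 2 * real (card u)"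
proof -
  have "(\<Sum>i\<in>I. walsh u {i}) = (\<Sum>i\<in>I. if i \<in> u then -1 else 1)"
    by (intro sum.cong refl) (auto simp: walsh_def)
  also have "\<dots> = real (card (I - u)) - real (card u)"
    using assms by (simp add: sum.If_cases Int_absorb1 flip: Diff_eq)
  also have "\<dots> = real (card I) - 2 * real (card u)"
    using assms by (simp add: card_Diff_subset card_mono finite_subset of_nat_diff)
  finally show ?thesis .
qed

lemma sum_adjacency_fourier:
  assumes I: "finite I"
  shows "(\<Sum>x\<in>Pow I. g x * (\<Sum>i\<in>I. g (sym_diff x {i})))
    = (\<Sum>u\<in>Pow I. (fourier I g u)\<^sup>2 * (real (card I) - 2 * real (card u))) / 2 ^ card I"
proof -
  have "(\<Sum>x\<in>Pow I. g x * (\<Sum>i\<in>I. g (sym_diff x {i}))) = (\<Sum>i\<in>I. \<Sum>x\<in>Pow I. g x * g (sym_diff x {i}))"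
    by (simp add: sum_distrib_left) (rule sum.swap)
  also have "\<dots> = (\<Sum>i\<in>I. \<Sum>u\<in>Pow I. (fourier I g u)\<^sup>2 * walsh u {i}) / 2 ^ card I"
    using I by (simp add: sum_autocorrelation sum_divide_distrib)
  also have "\<dots> = (\<Sum>u\<in>Pow I. (fourier I g u)\<^sup>2 * (\<Sum>i\<in>I. walsh u {i})) / 2 ^ card I"
    by (simp add: sum_distrib_left) (rule sum.swap)
  also have "\<dots> = (\<Sum>u\<in>Pow I. (fourier I g u)\<^sup>2 * (real (card I) - 2 * real (card u))) / 2 ^ card I"
    using I by (simp add: sum_walsh_singletons)
  finally show ?thesis .
qed

section \<open>The linear programming bound\<close>

lemma subeigenfunction_fourier_bound:
  fixes g :: "'a set \<Rightarrow> real"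
  assumes I: "finite I"
    and nonneg: "\<And>x. x \<in> Pow I \<Longrightarrow> 0 \<le> g x"
    and subeigen: "\<And>x. x \<in> Pow I \<Longrightarrow> \<theta> * g x \<le> (\<Sum>i\<in>I. g (sym_diff x {i}))"
    and spectrum: "\<And>u. u \<in> Pow I \<Longrightarrow> u \<noteq> {} \<Longrightarrow> fourier I g u \<noteq> 0 \<Longrightarrow> D \<le> card u"
  shows "(\<theta> - real (card I) + 2 * real D) * (\<Sum>u\<in>Pow I. (fourier I g u)\<^sup>2) \<le> 2 * real D * (fourier I g {})\<^sup>2"
proof -
  define m where "m = real (card I)"
  have "(\<Sum>x\<in>Pow I. \<theta> * (g x)\<^sup>2) \<le> (\<Sum>x\<in>Pow I. g x * (\<Sum>i\<in>I. g (sym_diff x {i})))"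
  proof (rule sum_mono)
    fix x assume "x \<in> Pow I"
    then have "g x * (\<theta> * g x) \<le> g x * (\<Sum>i\<in>I. g (sym_diff x {i}))"
      using nonneg subeigen by (intro mult_left_mono) auto
    then show "\<theta> * (g x)\<^sup>2 \<le> g x * (\<Sum>i\<in>I. g (sym_diff x {i}))"
      by (simp add: power2_eq_square mult_ac)
  qed
  then have "\<theta> * (\<Sum>x\<in>Pow I. (g x)\<^sup>2) \<le> (\<Sum>x\<in>Pow I. g x * (\<Sum>i\<in>I. g (sym_diff x {i})))"
    by (simp add: sum_distrib_left)
  then have "\<theta> * (\<Sum>u\<in>Pow I. (fourier I g u)\<^sup>2) / 2 ^ card I
      \<le> (\<Sum>u\<in>Pow I. (fourier I g u)\<^sup>2 * (m - 2 * real (card u))) / 2 ^ card I"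
    by (simp only: parseval[OF I, of g] sum_adjacency_fourier[OF I, of g] m_def times_divide_eq_right)
  then have "\<theta> * (\<Sum>u\<in>Pow I. (fourier I g u)\<^sup>2) \<le> (\<Sum>u\<in>Pow I. (fourier I g u)\<^sup>2 * (m - 2 * real (card u)))"
    by (simp add: divide_le_cancel)
  also have "\<dots> \<le> (\<Sum>u\<in>Pow I. (m - 2 * real D) * (fourier I g u)\<^sup>2 + (if u = {} then 2 * real D * (fourier I g u)\<^sup>2 else 0))"
  proof (rule sum_mono)
    fix u assume "u \<in> Pow I"
    then consider "u = {}" | "fourier I g u = 0" | "D \<le> card u"
      using spectrum by blast
    then show "(fourier I g u)\<^sup>2 * (m - 2 * real (card u))
        \<le> (m - 2 * real D) * (fourier I g u)\<^sup>2 + (if u = {} then 2 * real D * (fourier I g u)\<^sup>2 else 0)"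
    proof cases
      case 1
      then show ?thesis by (simp add: algebra_simps)
    next
      case 2
      then show ?thesis by simp
    next
      case 3
      then have "(fourier I g u)\<^sup>2 * real D \<le> (fourier I g u)\<^sup>2 * real (card u)"
        by (intro mult_left_mono) auto
      then have "(fourier I g u)\<^sup>2 * (m - 2 * real (card u)) \<le> (m - 2 * real D) * (fourier I g u)\<^sup>2"
        by (simp add: algebra_simps)
      moreover have "0 \<le> (if u = {} then 2 * real D * (fourier I g u)\<^sup>2 else 0)"
        by simp
      ultimately show ?thesis by linarith
    qed
  qed
  also have "\<dots> = (m - 2 * real D) * (\<Sum>u\<in>Pow I. (fourier I g u)\<^sup>2) + 2 * real D * (fourier I g {})\<^sup>2"
    using I by (simp add: sum.distrib sum_distrib_left)
  finally show ?thesis by (simp add: m_def algebra_simps)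
qed

definition convolution :: "'a set \<Rightarrow> ('a set \<Rightarrow> real) \<Rightarrow> ('a set \<Rightarrow> real) \<Rightarrow> 'a set \<Rightarrow> real" where
  "convolution I f w x = (\<Sum>y\<in>Pow I. f (sym_diff x y) * w y)"

lemma fourier_convolution:
  assumes I: "finite I" and u: "u \<subseteq> I"
  shows "fourier I (convolution I f w) u = fourier I f u * fourier I w u"
proof -
  have fin_u: "finite u" using u I by (rule finite_subset)
  have "fourier I (convolution I f w) u = (\<Sum>y\<in>Pow I. w y * (\<Sum>x\<in>Pow I. f (sym_diff x y) * walsh u x))"
    unfolding fourier_def convolution_def sum_distrib_right sum_distrib_left
    by (subst sum.swap) (simp add: mult_ac)
  also have "\<dots> = (\<Sum>y\<in>Pow I. w y * (walsh u y * fourier I f u))"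
  proof (rule sum.cong[OF refl])
    fix y assume y: "y \<in> Pow I"
    have "(\<Sum>x\<in>Pow I. f (sym_diff x y) * walsh u x)
        = (\<Sum>x\<in>Pow I. f (sym_diff (sym_diff x y) y) * walsh u (sym_diff x y))"
      using y by (intro sum_Pow_sym_diff[symmetric]) auto
    also have "\<dots> = (\<Sum>x\<in>Pow I. f x * walsh u (sym_diff x y))"
      by (simp only: sym_diff_sym_diff_cancel)
    also have "\<dots> = walsh u y * fourier I f u"
      using fin_u by (simp add: fourier_def walsh_sym_diff sum_distrib_left mult_ac)
    finally show "w y * (\<Sum>x\<in>Pow I. f (sym_diff x y) * walsh u x) = w y * (walsh u y * fourier I f u)"
      by simp
  qed
  also have "\<dots> = fourier I f u * fourier I w u"
    by (simp add: fourier_def sum_distrib_left mult_ac)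
  finally show ?thesis .
qed

lemma convolution_nonneg:
  assumes "\<And>x. 0 \<le> f x" "\<And>y. y \<in> Pow I \<Longrightarrow> 0 \<le> w y"
  shows "0 \<le> convolution I f w x"
  unfolding convolution_def using assms by (intro sum_nonneg mult_nonneg_nonneg) auto

lemma convolution_subeigen:
  assumes I: "finite I"
    and w: "\<And>y. y \<in> Pow I \<Longrightarrow> 0 \<le> w y"
    and subeigen: "\<And>x. x \<in> Pow I \<Longrightarrow> \<theta> * f x \<le> (\<Sum>i\<in>I. f (sym_diff x {i}))"
    and x: "x \<in> Pow I"
  shows "\<theta> * convolution I f w x \<le> (\<Sum>i\<in>I. convolution I f w (sym_diff x {i}))"
proof -
  have "\<theta> * convolution I f w x = (\<Sum>y\<in>Pow I. w y * (\<theta> * f (sym_diff x y)))"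
    by (simp add: convolution_def sum_distrib_left mult_ac)
  also have "\<dots> \<le> (\<Sum>y\<in>Pow I. w y * (\<Sum>i\<in>I. f (sym_diff (sym_diff x y) {i})))"
    using x w by (intro sum_mono mult_left_mono subeigen) auto
  also have "\<dots> = (\<Sum>i\<in>I. convolution I f w (sym_diff x {i}))"
    unfolding convolution_def sum_distrib_left
    by (subst sum.swap) (intro sum.cong refl, metis sym_diff_swap mult.commute)
  finally show ?thesis .
qed

lemma sum_sq_le_sq_sum:
  fixes a :: "'b \<Rightarrow> real"
  assumes "\<And>x. x \<in> A \<Longrightarrow> 0 \<le> a x"
  shows "(\<Sum>x\<in>A. (a x)\<^sup>2) \<le> (\<Sum>x\<in>A. a x)\<^sup>2"
proof (cases "finite A")
  case True
  have "(\<Sum>x\<in>A. (a x)\<^sup>2) \<le> (\<Sum>x\<in>A. \<Sum>y\<in>A. a x * a y)"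
    using True assms
    by (intro sum_mono) (auto simp: power2_eq_square intro: member_le_sum[of _ A "\<lambda>y. a _ * a y"])
  also have "\<dots> = (\<Sum>x\<in>A. a x)\<^sup>2"
    by (simp add: power2_eq_square sum_product)
  finally show ?thesis .
qed simp

lemma sum_sq_convolution_ge:
  assumes I: "finite I" and f: "\<And>x. 0 \<le> f x" and w: "\<And>y. y \<in> Pow I \<Longrightarrow> 0 \<le> w y"
  shows "(\<Sum>y\<in>Pow I. (w y)\<^sup>2) * (\<Sum>x\<in>Pow I. (f x)\<^sup>2) \<le> (\<Sum>x\<in>Pow I. (convolution I f w x)\<^sup>2)"
proof -
  have "(\<Sum>y\<in>Pow I. (w y)\<^sup>2) * (\<Sum>x\<in>Pow I. (f x)\<^sup>2)
      = (\<Sum>y\<in>Pow I. (w y)\<^sup>2 * (\<Sum>x\<in>Pow I. (f (sym_diff x y))\<^sup>2))"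
    by (simp add: sum_distrib_right sum_Pow_sym_diff[where h="\<lambda>z. (f z)\<^sup>2"])
  also have "\<dots> = (\<Sum>x\<in>Pow I. \<Sum>y\<in>Pow I. (f (sym_diff x y) * w y)\<^sup>2)"
    by (subst sum.swap) (simp add: sum_distrib_left power_mult_distrib mult_ac)
  also have "\<dots> \<le> (\<Sum>x\<in>Pow I. (convolution I f w x)\<^sup>2)"
    unfolding convolution_def using f w by (intro sum_mono sum_sq_le_sq_sum) auto
  finally show ?thesis .
qed

lemma fourier_sum_walsh:
  assumes I: "finite I" and C: "C \<subseteq> Pow I" and u: "u \<subseteq> I"
  shows "fourier I (\<lambda>y. \<Sum>c\<in>C. walsh c y) u = (if u \<in> C then 2 ^ card I else 0)"
proof -
  have fin_C: "finite C" using C I by (meson finite_Pow_iff finite_subset)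
  have "fourier I (\<lambda>y. \<Sum>c\<in>C. walsh c y) u = (\<Sum>c\<in>C. \<Sum>y\<in>Pow I. walsh c y * walsh u y)"
    unfolding fourier_def sum_distrib_right by (rule sum.swap)
  also have "\<dots> = (\<Sum>c\<in>C. if c = u then 2 ^ card I else 0)"
  proof (rule sum.cong[OF refl])
    fix c assume "c \<in> C"
    then have "c \<subseteq> I" using C by blast
    show "(\<Sum>y\<in>Pow I. walsh c y * walsh u y) = (if c = u then 2 ^ card I else 0)"
      by (rule walsh_orthogonal[OF I \<open>c \<subseteq> I\<close> u])
  qed
  also have "\<dots> = (if u \<in> C then 2 ^ card I else 0)"
    using fin_C by (simp add: sum.delta)
  finally show ?thesis .
qed

lemma sum_sq_sum_walsh:
  assumes I: "finite I" and C: "C \<subseteq> Pow I"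
  shows "(\<Sum>y\<in>Pow I. (\<Sum>c\<in>C. walsh c y)\<^sup>2) = 2 ^ card I * real (card C)"
proof -
  have "(\<Sum>y\<in>Pow I. (\<Sum>c\<in>C. walsh c y)\<^sup>2)
      = (\<Sum>u\<in>Pow I. (fourier I (\<lambda>y. \<Sum>c\<in>C. walsh c y) u)\<^sup>2) / 2 ^ card I"
    by (rule parseval[OF I])
  also have "(\<Sum>u\<in>Pow I. (fourier I (\<lambda>y. \<Sum>c\<in>C. walsh c y) u)\<^sup>2)
      = (\<Sum>u\<in>Pow I. if u \<in> C then (2 ^ card I)\<^sup>2 else 0)"
    by (rule sum.cong) (simp_all add: fourier_sum_walsh[OF I C])
  also have "(\<Sum>u\<in>Pow I. if u \<in> C then (2 ^ card I)\<^sup>2 else 0) / 2 ^ card I = 2 ^ card I * real (card C)"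
    using C I by (simp add: sum.If_cases Int_absorb1 power2_eq_square)
  finally show ?thesis .
qed

lemma sum_walsh_code_nonneg:
  assumes y: "finite y" and closed: "\<And>a b. a \<in> C \<Longrightarrow> b \<in> C \<Longrightarrow> sym_diff a b \<in> C"
  shows "0 \<le> (\<Sum>c\<in>C. walsh c y)"
proof (cases "\<exists>c0\<in>C. walsh c0 y = -1")
  case True
  then obtain c0 where c0: "c0 \<in> C" "walsh c0 y = -1" by blast
  have "(\<Sum>c\<in>C. walsh c y) = (\<Sum>c\<in>C. walsh (sym_diff c c0) y)"
    by (rule sum.reindex_bij_witness[where i="\<lambda>c. sym_diff c c0" and j="\<lambda>c. sym_diff c c0"])
       (auto simp: c0 closed sym_diff_sym_diff_cancel)
  also have "\<dots> = - (\<Sum>c\<in>C. walsh c y)"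
    using y c0 by (simp add: walsh_commute[of _ y] walsh_sym_diff sum_negf)
  finally show ?thesis by simp
next
  case False
  then have "\<And>c. c \<in> C \<Longrightarrow> walsh c y = 1" using walsh_cases by blast
  then show ?thesis by (simp add: sum_nonneg)
qed

text \<open>The sum w of the characters of C is nonnegative because C is closed under symmetric
  difference, and its Fourier transform is 2^|I| times the indicator of C.  Convolving f with w
  therefore keeps the subeigenvalue theta and moves the Fourier support into C, where the weight
  bound applies.\<close>

lemma card_code_le:
  fixes f :: "'a set \<Rightarrow> real" and C :: "'a set set"
  assumes I: "finite I" and C: "C \<subseteq> Pow I" and empty: "{} \<in> C"
    and closed: "\<And>a b. a \<in> C \<Longrightarrow> b \<in> C \<Longrightarrow> sym_diff a b \<in> C"
    and weight: "\<And>c. c \<in> C \<Longrightarrow> c \<noteq> {} \<Longrightarrow> D \<le> card c"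
    and f: "\<And>x. 0 \<le> f x"
    and subeigen: "\<And>x. x \<in> Pow I \<Longrightarrow> \<theta> * f x \<le> (\<Sum>i\<in>I. f (sym_diff x {i}))"
    and \<theta>: "real (card I) - 2 * real D + 1 \<le> \<theta>"
  shows "real (card C) * (\<Sum>x\<in>Pow I. (f x)\<^sup>2) \<le> 2 * real D * (\<Sum>x\<in>Pow I. f x)\<^sup>2"
proof -
  define N :: real where "N = 2 ^ card I"
  define w where "w = (\<lambda>y. \<Sum>c\<in>C. walsh c y)"
  define F where "F = convolution I f w"
  have w: "0 \<le> w y" if "y \<in> Pow I" for y
    unfolding w_def using that I by (intro sum_walsh_code_nonneg closed) (auto intro: finite_subset)
  have fourier_w: "fourier I w u = (if u \<in> C then N else 0)" if "u \<in> Pow I" for u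
    using fourier_sum_walsh[OF I C] that by (simp add: w_def N_def)
  have fourier_F: "fourier I F u = fourier I f u * (if u \<in> C then N else 0)" if "u \<in> Pow I" for u
    using that I by (simp add: F_def fourier_convolution fourier_w)
  have bound: "(\<theta> - real (card I) + 2 * real D) * (\<Sum>u\<in>Pow I. (fourier I F u)\<^sup>2) \<le> 2 * real D * (fourier I F {})\<^sup>2"
  proof (rule subeigenfunction_fourier_bound[OF I])
    show "0 \<le> F x" for x
      unfolding F_def by (rule convolution_nonneg[OF f w])
    show "\<theta> * F x \<le> (\<Sum>i\<in>I. F (sym_diff x {i}))" if "x \<in> Pow I" for x
      unfolding F_def using I w subeigen that by (rule convolution_subeigen)
    show "D \<le> card u" if "u \<in> Pow I" "u \<noteq> {}" "fourier I F u \<noteq> 0" for u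
      using that fourier_F weight by (auto split: if_splits)
  qed
  have factor: "1 \<le> \<theta> - real (card I) + 2 * real D"
    using \<theta> by linarith
  have "(\<Sum>u\<in>Pow I. (fourier I F u)\<^sup>2) \<le> (\<theta> - real (card I) + 2 * real D) * (\<Sum>u\<in>Pow I. (fourier I F u)\<^sup>2)"
    using mult_right_mono[OF factor, of "\<Sum>u\<in>Pow I. (fourier I F u)\<^sup>2"] by (simp add: sum_nonneg)
  with bound have spectral: "(\<Sum>u\<in>Pow I. (fourier I F u)\<^sup>2) \<le> 2 * real D * (fourier I F {})\<^sup>2"
    by linarith
  have F_empty: "fourier I F {} = N * (\<Sum>x\<in>Pow I. f x)"
    using fourier_F[of "{}"] empty by (simp add: fourier_empty)
  have sum_w: "(\<Sum>y\<in>Pow I. (w y)\<^sup>2) = N * real (card C)"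
    using sum_sq_sum_walsh[OF I C] by (simp add: w_def N_def)
  have "N * (N * real (card C) * (\<Sum>x\<in>Pow I. (f x)\<^sup>2)) \<le> N * (\<Sum>x\<in>Pow I. (F x)\<^sup>2)"
    using sum_sq_convolution_ge[of I f w, OF I f w] by (simp add: F_def sum_w N_def)
  also have "\<dots> = (\<Sum>u\<in>Pow I. (fourier I F u)\<^sup>2)"
    by (simp add: parseval[OF I, of F] N_def)
  also have "\<dots> \<le> N\<^sup>2 * (2 * real D * (\<Sum>x\<in>Pow I. f x)\<^sup>2)"
    using spectral by (simp add: F_empty power_mult_distrib mult_ac)
  finally show ?thesis
    by (simp add: N_def power2_eq_square mult_ac)
qed

definition bump :: "nat \<Rightarrow> nat \<Rightarrow> nat \<Rightarrow> real" where
  "bump r L i = (if r < i \<and> i < r + L then (real i - real r) * (real r + real L - real i) else 0)"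

text \<open>A subeigenvalue of the test function x \<mapsto> \<alpha>^|x| * bump r L |x| for the adjacency operator
  of the cube, see \<open>bump_subeigen\<close>.\<close>

definition bump_eigenvalue :: "nat \<Rightarrow> nat \<Rightarrow> nat \<Rightarrow> real \<Rightarrow> real" where
  "bump_eigenvalue m r L \<alpha> = 2 * min ((real m - real r - real L) * \<alpha>) (real r / \<alpha>) * (real L - 2) / (real L - 1)"

lemma bump_nonneg: "0 \<le> bump r L i"
  by (simp add: bump_def)

lemma bump_eq: "r \<le> i \<Longrightarrow> i \<le> r + L \<Longrightarrow> bump r L i = (real i - real r) * (real r + real L - real i)"
  by (auto simp: bump_def)

lemma sum_singleton_sym_diff_card:
  assumes "finite I" "x \<subseteq> I"
  shows "(\<Sum>i\<in>I. h (card (sym_diff x {i})))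
    = real (card x) * h (card x - 1) + real (card I - card x) * h (card x + 1)"
proof -
  have fin_x: "finite x" using assms finite_subset by blast
  have "(\<Sum>i\<in>I. h (card (sym_diff x {i}))) = (\<Sum>i\<in>x. h (card (sym_diff x {i}))) + (\<Sum>i\<in>I - x. h (card (sym_diff x {i})))"
    by (simp only: sum.subset_diff[OF assms(2,1)] add.commute)
  also have "(\<Sum>i\<in>x. h (card (sym_diff x {i}))) = (\<Sum>i\<in>x. h (card x - 1))"
    using fin_x by (intro sum.cong refl) (simp add: insert_absorb)
  also have "(\<Sum>i\<in>I - x. h (card (sym_diff x {i}))) = (\<Sum>i\<in>I - x. h (card x + 1))"
    using fin_x by (intro sum.cong refl) auto
  finally show ?thesis using assms fin_x by (simp add: card_Diff_subset)
qed

lemma bump_concave: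
  assumes L: "L \<ge> 2"
  shows "2 * (real L - 2) / (real L - 1) * bump r L k \<le> bump r L (k - 1) + bump r L (k + 1)"
proof (cases "r < k \<and> k < r + L")
  case False
  then have "bump r L k = 0" by (simp add: bump_def)
  then show ?thesis by (simp add: add_nonneg_nonneg bump_nonneg)
next
  case True
  define j where "j = real k - real r"
  have j: "1 \<le> j" "j \<le> real L - 1" using True by (auto simp: j_def)
  have "bump r L (k - 1) = (j - 1) * (real L - j + 1)"
    using True by (subst bump_eq) (auto simp: j_def of_nat_diff algebra_simps)
  moreover have "bump r L (k + 1) = (j + 1) * (real L - j - 1)"
    using True by (subst bump_eq) (auto simp: j_def algebra_simps)
  ultimately have "bump r L (k - 1) + bump r L (k + 1) = 2 * (j * (real L - j)) - 2"
    by (simp add: algebra_simps)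
  moreover have "bump r L k = j * (real L - j)"
    using True by (subst bump_eq) (auto simp: j_def algebra_simps)
  moreover have "real L - 1 \<le> j * (real L - j)"
    using mult_nonneg_nonneg[of "j - 1" "real L - 1 - j"] j by (simp add: algebra_simps)
  then have "2 * (real L - 2) / (real L - 1) * (j * (real L - j)) \<le> 2 * (j * (real L - j)) - 2"
    using L by (simp add: field_simps)
  ultimately show ?thesis by (simp only:)
qed

lemma bump_subeigen:
  fixes \<alpha> :: real
  assumes \<alpha>: "\<alpha> > 0" and L: "L \<ge> 3" and m: "r + L \<le> m" and k: "k \<le> m"
  shows "bump_eigenvalue m r L \<alpha> * (\<alpha> ^ k * bump r L k)
    \<le> real k * (\<alpha> ^ (k - 1) * bump r L (k - 1)) + real (m - k) * (\<alpha> ^ (k + 1) * bump r L (k + 1))"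
proof (cases "r < k \<and> k < r + L")
  case False
  then have "bump r L k = 0" by (simp add: bump_def)
  then show ?thesis using \<alpha> by (simp add: bump_nonneg)
next
  case True
  define \<mu> where "\<mu> = min ((real m - real r - real L) * \<alpha>) (real r / \<alpha>)"
  have \<mu>_nonneg: "0 \<le> \<mu>" using \<alpha> m by (auto simp: \<mu>_def)
  have "\<alpha> * \<mu> \<le> \<alpha> * (real r / \<alpha>)"
    using \<alpha> by (intro mult_left_mono) (auto simp: \<mu>_def)
  then have \<mu>_left: "\<alpha> * \<mu> \<le> real k"
    using True \<alpha> by simp
  have \<mu>_right: "\<mu> \<le> real (m - k) * \<alpha>"
    using True k \<alpha> by (auto simp: \<mu>_def min_le_iff_disj of_nat_diff intro!: mult_right_mono)
  have pow: "\<alpha> ^ k = \<alpha> ^ (k - 1) * \<alpha>" "\<alpha> ^ (k + 1) = \<alpha> ^ k * \<alpha>"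
    using True by (simp_all flip: power_Suc2)
  have "bump_eigenvalue m r L \<alpha> * (\<alpha> ^ k * bump r L k)
      = \<alpha> ^ k * \<mu> * (2 * (real L - 2) / (real L - 1) * bump r L k)"
    by (simp add: bump_eigenvalue_def \<mu>_def)
  also have "\<dots> \<le> \<alpha> ^ k * \<mu> * (bump r L (k - 1) + bump r L (k + 1))"
    using bump_concave[of L r k] L \<mu>_nonneg \<alpha> by (intro mult_left_mono) auto
  also have "\<dots> = \<alpha> ^ (k - 1) * (\<alpha> * \<mu>) * bump r L (k - 1) + \<alpha> ^ k * \<mu> * bump r L (k + 1)"
    by (simp add: pow(1) algebra_simps)
  also have "\<dots> \<le> \<alpha> ^ (k - 1) * real k * bump r L (k - 1) + \<alpha> ^ k * (real (m - k) * \<alpha>) * bump r L (k + 1)"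
    using \<mu>_left \<mu>_right \<alpha> by (intro add_mono mult_right_mono mult_left_mono) (auto simp: bump_nonneg)
  finally show ?thesis by (simp add: pow(2) mult_ac)
qed

lemma card_code_le_card_ball:
  fixes C :: "'a set set" and \<alpha> :: real
  assumes I: "finite I" and C: "C \<subseteq> Pow I" and empty: "{} \<in> C"
    and closed: "\<And>a b. a \<in> C \<Longrightarrow> b \<in> C \<Longrightarrow> sym_diff a b \<in> C"
    and weight: "\<And>c. c \<in> C \<Longrightarrow> c \<noteq> {} \<Longrightarrow> D \<le> card c"
    and \<alpha>: "\<alpha> > 0" and L: "L \<ge> 3" and m: "r + L \<le> card I"
    and \<theta>: "real (card I) - 2 * real D + 1 \<le> bump_eigenvalue (card I) r L \<alpha>"
  shows "real (card C) \<le> 2 * real D * real (card {x \<in> Pow I. card x \<le> r + L})"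
proof -
  define f where "f x = \<alpha> ^ card x * bump r L (card x)" for x :: "'a set"
  define B where "B = {x \<in> Pow I. card x \<le> r + L}"
  have f_nonneg: "0 \<le> f x" for x
    using \<alpha> by (simp add: f_def bump_nonneg)
  have subeigen: "bump_eigenvalue (card I) r L \<alpha> * f x \<le> (\<Sum>i\<in>I. f (sym_diff x {i}))" if "x \<in> Pow I" for x
  proof -
    from that have x: "x \<subseteq> I" by simp
    show ?thesis
      using bump_subeigen[OF \<alpha> L m card_mono[OF I x]]
        sum_singleton_sym_diff_card[OF I x, of "\<lambda>k. \<alpha> ^ k * bump r L k"]
      by (simp add: f_def)
  qed
  have "r + 1 \<le> card I" using m L by simp
  then obtain x0 where x0: "x0 \<subseteq> I" "card x0 = r + 1"
    by (rule obtain_subset_with_card_n)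
  have "0 < (f x0)\<^sup>2"
    using x0 \<alpha> L by (simp add: f_def bump_def)
  also have "(f x0)\<^sup>2 \<le> (\<Sum>x\<in>Pow I. (f x)\<^sup>2)"
    using x0 I by (intro member_le_sum) auto
  finally have pos: "0 < (\<Sum>x\<in>Pow I. (f x)\<^sup>2)" .
  have "(\<Sum>x\<in>Pow I. f x) = (\<Sum>x\<in>B. f x)"
    using I by (intro sum.mono_neutral_right) (auto simp: B_def f_def bump_def)
  also have "(\<Sum>x\<in>B. f x)\<^sup>2 \<le> (\<Sum>x\<in>B. (f x)\<^sup>2) * real (card B)"
    by (rule sum_squared_le_sum_of_squares)
  also have "\<dots> \<le> (\<Sum>x\<in>Pow I. (f x)\<^sup>2) * real (card B)"
    using I by (intro mult_right_mono sum_mono2) (auto simp: B_def)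
  finally have "(\<Sum>x\<in>Pow I. f x)\<^sup>2 \<le> (\<Sum>x\<in>Pow I. (f x)\<^sup>2) * real (card B)" .
  with card_code_le[OF I C empty closed weight f_nonneg subeigen \<theta>]
  have "real (card C) * (\<Sum>x\<in>Pow I. (f x)\<^sup>2) \<le> (2 * real D * real (card B)) * (\<Sum>x\<in>Pow I. (f x)\<^sup>2)"
    by (simp add: mult_left_mono mult_ac order_trans)
  then show ?thesis using pos by (simp add: B_def)
qed

lemma card_ball:
  assumes "finite I"
  shows "card {x \<in> Pow I. card x \<le> s} = (\<Sum>i\<le>s. card I choose i)"
proof -
  have "{x \<in> Pow I. card x \<le> s} = (\<Union>i\<le>s. {x. x \<subseteq> I \<and> card x = i})" by auto
  moreover have "card (\<Union>i\<le>s. {x. x \<subseteq> I \<and> card x = i}) = (\<Sum>i\<le>s. card {x. x \<subseteq> I \<and> card x = i})"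
    using assms by (intro card_UN_disjoint) (auto intro: finite_subset[of _ "Pow I"])
  ultimately show ?thesis using n_subsets[OF assms] by simp
qed

lemma binomial_tail_le:
  fixes p :: real
  assumes p: "0 < p" "p \<le> 1/2" and s: "s \<le> m"
  shows "(\<Sum>i\<le>s. real (m choose i)) * (p ^ s * (1 - p) ^ (m - s)) \<le> 1"
proof -
  have "(\<Sum>i\<le>s. real (m choose i)) * (p ^ s * (1 - p) ^ (m - s))
      \<le> (\<Sum>i\<le>s. real (m choose i) * (p ^ i * (1 - p) ^ (m - i)))"
    unfolding sum_distrib_right
  proof (intro sum_mono mult_left_mono)
    fix i assume "i \<in> {..s}"
    then have i: "i \<le> s" by simp
    have "p ^ (s - i) \<le> (1 - p) ^ (s - i)" using p by (intro power_mono) auto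
    then have "p ^ i * p ^ (s - i) * (1 - p) ^ (m - s) \<le> p ^ i * ((1 - p) ^ (s - i) * (1 - p) ^ (m - s))"
      using p by (simp add: mult_left_mono mult_right_mono)
    then show "p ^ s * (1 - p) ^ (m - s) \<le> p ^ i * (1 - p) ^ (m - i)"
      using i s by (simp flip: power_add)
  qed simp
  also have "\<dots> \<le> (\<Sum>i\<le>m. real (m choose i) * (p ^ i * (1 - p) ^ (m - i)))"
    using s p by (intro sum_mono2) auto
  also have "\<dots> = 1" using binomial_ring[of p "1 - p" m] by (simp add: mult.assoc)
  finally show ?thesis .
qed

definition binary_entropy :: "real \<Rightarrow> real" where
  "binary_entropy p = - p * ln p - (1 - p) * ln (1 - p)"

lemma ln_card_ball_le:
  fixes p c :: real
  assumes I: "finite I" and p: "0 < p" "p \<le> 1/2"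
    and s: "s \<le> card I" "real s \<le> p * real (card I) + c"
  shows "ln (card {x \<in> Pow I. card x \<le> s}) \<le> real (card I) * binary_entropy p + c * ln ((1 - p) / p)"
proof -
  define m where "m = card I"
  define B where "B = (\<Sum>i\<le>s. real (m choose i))"
  have B_pos: "0 < B" by (simp add: B_def sum_pos2[of _ 0])
  have "B * (p ^ s * (1 - p) ^ (m - s)) \<le> 1"
    unfolding B_def using p s by (intro binomial_tail_le) (auto simp: m_def)
  then have "ln (B * (p ^ s * (1 - p) ^ (m - s))) \<le> 0"
    using B_pos p by (subst ln_le_zero_iff) auto
  then have "ln B + (real s * ln p + real (m - s) * ln (1 - p)) \<le> 0"
    using B_pos p by (simp add: ln_mult ln_realpow)
  then have "ln B \<le> real m * (- ln (1 - p)) + real s * (ln (1 - p) - ln p)"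
    using s by (simp add: m_def of_nat_diff algebra_simps)
  also have "\<dots> \<le> real m * (- ln (1 - p)) + (p * real m + c) * (ln (1 - p) - ln p)"
    using s p by (intro add_left_mono mult_right_mono) (auto simp: m_def)
  also have "\<dots> = real m * binary_entropy p + c * ln ((1 - p) / p)"
    using p by (simp add: binary_entropy_def ln_div algebra_simps)
  finally show ?thesis using card_ball[OF I, of s] by (simp add: B_def m_def)
qed

lemma ln_card_code_le:
  fixes C :: "'a set set" and \<alpha> p :: real
  assumes I: "finite I" and C: "C \<subseteq> Pow I" and empty: "{} \<in> C"
    and closed: "\<And>a b. a \<in> C \<Longrightarrow> b \<in> C \<Longrightarrow> sym_diff a b \<in> C"
    and weight: "\<And>c. c \<in> C \<Longrightarrow> c \<noteq> {} \<Longrightarrow> D \<le> card c"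
    and \<alpha>: "\<alpha> > 0" and L: "L \<ge> 3" and m: "r + L \<le> card I"
    and \<theta>: "real (card I) - 2 * real D + 1 \<le> bump_eigenvalue (card I) r L \<alpha>"
    and p: "0 < p" "p \<le> 1/2" "real r \<le> p * real (card I)"
  shows "ln (card C) \<le> ln (2 * real D) + real (card I) * binary_entropy p + real L * ln ((1 - p) / p)"
proof -
  define B where "B = real (card {x \<in> Pow I. card x \<le> r + L})"
  have bound: "real (card C) \<le> 2 * real D * B"
    unfolding B_def by (rule card_code_le_card_ball[OF I C empty closed weight \<alpha> L m \<theta>])
  have "0 < card C"
    using C I empty by (auto simp: card_gt_0_iff intro: finite_subset)
  moreover have "0 < B"
    using I by (auto simp: B_def card_gt_0_iff intro!: exI[of _ "{}"])
  moreover from this have "0 < real D"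
    using bound \<open>0 < card C\<close> by (cases "D = 0") auto
  ultimately have "ln (card C) \<le> ln (2 * real D * B)"
    using bound by simp
  also have "\<dots> = ln (2 * real D) + ln B"
    using \<open>0 < B\<close> \<open>0 < real D\<close> by (simp add: ln_mult)
  also have "ln B \<le> real (card I) * binary_entropy p + real L * ln ((1 - p) / p)"
    unfolding B_def using I p m by (intro ln_card_ball_le) auto
  finally show ?thesis by simp
qed

section \<open>Binary linear codes\<close>

definition supp :: "(nat \<Rightarrow> bit) \<Rightarrow> nat set" where
  "supp v = {i. v i \<noteq> 0}"

lemma supp_add: "supp (v + w) = sym_diff (supp v) (supp w)"
proof -
  have "(a + b \<noteq> (0::bit)) \<longleftrightarrow> (a \<noteq> 0) \<noteq> (b \<noteq> 0)" for a b
    by (cases a; cases b) simp_all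
  then show ?thesis by (auto simp: supp_def)
qed

lemma inj_supp: "inj supp"
proof (rule injI, rule ext)
  fix v w :: "nat \<Rightarrow> bit" and i
  assume "supp v = supp w"
  then have "v i \<noteq> 0 \<longleftrightarrow> w i \<noteq> 0" by (auto simp: supp_def)
  then show "v i = w i" by (cases "v i"; cases "w i") simp_all
qed

lemma supp_eq_empty_iff [simp]: "supp v = {} \<longleftrightarrow> v = 0"
  by (auto simp: supp_def fun_eq_iff)

lemma supp_subset_cube: "v \<in> cube n \<Longrightarrow> supp v \<subseteq> {..<n}"
  by (auto simp: cube_def supp_def not_less[symmetric])

lemma finite_cube: "finite (cube n)"
proof -
  have "supp ` cube n \<subseteq> Pow {..<n}"
    using supp_subset_cube by blast
  then have "finite (supp ` cube n)"
    by (rule finite_subset) simp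
  then show ?thesis
    using inj_supp by (rule finite_imageD[OF _ inj_on_subset]) simp
qed

lemma subspace_vanishing:
  assumes "f2.subspace F"
  shows "f2.subspace {v \<in> F. \<forall>i\<in>S. v i = 0}"
proof (rule f2.subspaceI)
  show "0 \<in> {v \<in> F. \<forall>i\<in>S. v i = 0}"
    using f2.subspace_0[OF assms] by simp
  show "x + y \<in> {v \<in> F. \<forall>i\<in>S. v i = 0}"
    if "x \<in> {v \<in> F. \<forall>i\<in>S. v i = 0}" "y \<in> {v \<in> F. \<forall>i\<in>S. v i = 0}" for x y
    using that f2.subspace_add[OF assms] by auto
  show "(\<lambda>i. c * x i) \<in> {v \<in> F. \<forall>i\<in>S. v i = 0}" if "x \<in> {v \<in> F. \<forall>i\<in>S. v i = 0}" for c x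
    using that f2.subspace_scale[OF assms] by auto
qed

lemma two_pow_dim_le_card:
  assumes fin: "finite F" and sub: "f2.subspace F"
  shows "2 ^ f2.dim F \<le> card F"
proof -
  obtain B where B: "B \<subseteq> F" "f2.independent B" "F \<subseteq> f2.span B" "card B = f2.dim F"
    by (rule f2.basis_exists)
  have fin_B: "finite B" using B(1) fin by (rule finite_subset)
  define g where "g T = (\<Sum>v\<in>B. (\<lambda>i. (if v \<in> T then 1 else 0) * v i))" for T
  have g_F: "g T \<in> F" for T
    unfolding g_def
  proof (rule f2.subspace_sum[OF sub])
    fix v assume "v \<in> B"
    then show "(\<lambda>i. (if v \<in> T then 1 else 0) * v i) \<in> F"
      using B(1) f2.subspace_scale[OF sub] by blast
  qed
  have "inj_on g (Pow B)"
  proof (rule inj_onI, rule ccontr)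
    fix T T' assume T: "T \<in> Pow B" "T' \<in> Pow B" "g T = g T'" "T \<noteq> T'"
    define u where "u v = (if v \<in> T then 1 else 0) - (if v \<in> T' then (1::bit) else 0)" for v
    have "(\<Sum>v\<in>B. (\<lambda>i. u v * v i))
        = (\<Sum>v\<in>B. (\<lambda>i. (if v \<in> T then 1 else 0) * v i) - (\<lambda>i. (if v \<in> T' then 1 else 0) * v i))"
      by (intro sum.cong refl ext) (simp only: u_def minus_apply left_diff_distrib)
    also have "\<dots> = g T - g T'"
      unfolding g_def by (rule sum_subtractf)
    finally have "(\<Sum>v\<in>B. (\<lambda>i. u v * v i)) = 0"
      using T(3) by simp
    moreover obtain v where "v \<in> B" "(v \<in> T) \<noteq> (v \<in> T')"
      using T by blast
    moreover from this have "u v \<noteq> 0"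
      by (auto simp: u_def)
    ultimately have "f2.dependent B"
      using f2.dependent_finite[OF fin_B] by blast
    then show False using B(2) by simp
  qed
  then have "card (Pow B) \<le> card F"
    using g_F fin by (intro card_inj_on_le) auto
  then show ?thesis using B(4) fin_B by (simp add: card_Pow)
qed

lemma card_le_shortening:
  assumes sub: "f2.subspace F" and fin: "finite F" and S: "finite S"
  shows "card F \<le> 2 ^ card S * card {v \<in> F. \<forall>i\<in>S. v i = 0}"
proof -
  define K where "K = {v \<in> F. \<forall>i\<in>S. v i = 0}"
  define r where "r v = supp v \<inter> S" for v
  have fiber: "card {v \<in> F. r v = T} \<le> card K" if "T \<in> r ` F" for T
  proof -
    obtain v0 where v0: "v0 \<in> F" "r v0 = T" using \<open>T \<in> r ` F\<close> by blast
    have "(\<lambda>v. v + v0) ` {v \<in> F. r v = T} \<subseteq> K"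
    proof clarify
      fix v assume v: "v \<in> F" "T = r v"
      have "r (v + v0) = sym_diff (r v) (r v0)"
        unfolding r_def supp_add by blast
      then have "r (v + v0) = {}"
        using v v0 by simp
      then show "v + v0 \<in> K"
        using v v0 f2.subspace_add[OF sub] by (auto simp: K_def r_def supp_def)
    qed
    moreover have "finite K" using fin by (simp add: K_def)
    ultimately show ?thesis
      using card_inj_on_le[of "\<lambda>v. v + v0" "{v \<in> F. r v = T}" K] by (simp add: inj_on_def)
  qed
  have "card F = card (\<Union>T\<in>r ` F. {v \<in> F. r v = T})"
    by (rule arg_cong[where f=card]) blast
  also have "\<dots> \<le> (\<Sum>T\<in>r ` F. card {v \<in> F. r v = T})"
    using fin by (intro card_UN_le) simp
  also have "\<dots> \<le> card (r ` F) * card K"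
    using fiber sum_bounded_above[of "r ` F" "\<lambda>T. card {v \<in> F. r v = T}" "card K"] by simp
  also have "\<dots> \<le> 2 ^ card S * card K"
  proof (rule mult_right_mono)
    have "card (r ` F) \<le> card (Pow S)"
      using S by (intro card_mono) (auto simp: r_def)
    then show "card (r ` F) \<le> 2 ^ card S"
      using S by (simp add: card_Pow)
  qed simp
  finally show ?thesis
    by (simp add: K_def)
qed

lemma card_le_two_pow_if_meets:
  assumes sub: "f2.subspace F" and fin: "finite F" and S: "finite S"
    and meets: "\<And>v. v \<in> F \<Longrightarrow> v \<noteq> 0 \<Longrightarrow> supp v \<inter> S \<noteq> {}"
  shows "card F \<le> 2 ^ card S"
proof -
  have kernel: "{v \<in> F. \<forall>i\<in>S. v i = 0} \<subseteq> {0}"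
  proof clarify
    fix v assume v: "v \<in> F" "\<forall>i\<in>S. v i = 0"
    then have "supp v \<inter> S = {}" by (auto simp: supp_def)
    with meets v(1) show "v = 0" by blast
  qed
  have "card {v \<in> F. \<forall>i\<in>S. v i = 0} \<le> 1"
    using card_mono[OF _ kernel] by simp
  then have "2 ^ card S * card {v \<in> F. \<forall>i\<in>S. v i = 0} \<le> 2 ^ card S"
    by simp
  with card_le_shortening[OF sub fin S] show ?thesis
    by (rule order_trans)
qed

lemma dim_le_card_if_meets:
  assumes sub: "f2.subspace F" and fin: "finite F" and S: "finite S"
    and meets: "\<And>v. v \<in> F \<Longrightarrow> v \<noteq> 0 \<Longrightarrow> supp v \<inter> S \<noteq> {}"
  shows "f2.dim F \<le> card S"
proof -
  have "2 ^ f2.dim F \<le> card F"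
    using fin sub by (rule two_pow_dim_le_card)
  also have "\<dots> \<le> 2 ^ card S"
    using sub fin S meets by (rule card_le_two_pow_if_meets)
  finally show ?thesis by simp
qed

lemma ln_card_le_shortening:
  assumes sub: "f2.subspace F" and fin: "finite F" and S: "finite S"
  shows "ln (card F) \<le> real (card S) * ln 2 + ln (card {v \<in> F. \<forall>i\<in>S. v i = 0})"
proof -
  define K where "K = {v \<in> F. \<forall>i\<in>S. v i = 0}"
  have "real (card F) \<le> 2 ^ card S * real (card K)"
    using of_nat_mono[OF card_le_shortening[OF sub fin S]]
    by (simp only: K_def of_nat_mult of_nat_power of_nat_numeral)
  moreover have "0 < card K"
    using f2.subspace_0[OF sub] fin by (auto simp: K_def card_gt_0_iff)
  moreover have "0 < card F"
    using f2.subspace_0[OF sub] fin by (auto simp: card_gt_0_iff)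
  ultimately have "ln (card F) \<le> ln (2 ^ card S * real (card K))"
    by (intro ln_mono) simp_all
  with \<open>0 < card K\<close> show ?thesis
    by (simp add: K_def ln_mult ln_realpow)
qed

lemma ln_card_linear_code_le:
  fixes F :: "(nat \<Rightarrow> bit) set" and \<alpha> p :: real
  assumes sub: "f2.subspace F" and I: "finite I" and supp_I: "\<And>v. v \<in> F \<Longrightarrow> supp v \<subseteq> I"
    and weight: "\<And>v. v \<in> F \<Longrightarrow> v \<noteq> 0 \<Longrightarrow> D \<le> card (supp v)"
    and \<alpha>: "\<alpha> > 0" and L: "L \<ge> 3" and m: "r + L \<le> card I"
    and \<theta>: "real (card I) - 2 * real D + 1 \<le> bump_eigenvalue (card I) r L \<alpha>"
    and p: "0 < p" "p \<le> 1/2" "real r \<le> p * real (card I)"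
  shows "ln (card F) \<le> ln (2 * real D) + real (card I) * binary_entropy p + real L * ln ((1 - p) / p)"
proof -
  have "card (supp ` F) = card F"
    using inj_supp by (simp add: card_image inj_on_subset)
  moreover have "ln (card (supp ` F))
      \<le> ln (2 * real D) + real (card I) * binary_entropy p + real L * ln ((1 - p) / p)"
  proof (rule ln_card_code_le[OF I _ _ _ _ \<alpha> L m \<theta> p])
    show "supp ` F \<subseteq> Pow I"
      using supp_I by blast
    show "{} \<in> supp ` F"
      using f2.subspace_0[OF sub] supp_eq_empty_iff by blast
    show "sym_diff a b \<in> supp ` F" if a: "a \<in> supp ` F" and b: "b \<in> supp ` F" for a b
    proof -
      obtain v w where "v \<in> F" "w \<in> F" "a = supp v" "b = supp w"
        using a b by blast
      then show ?thesis
        using f2.subspace_add[OF sub] supp_add[of v w] by (metis image_eqI)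
    qed
    show "D \<le> card c" if c: "c \<in> supp ` F" "c \<noteq> {}" for c
    proof -
      obtain v where "v \<in> F" "c = supp v"
        using c(1) by blast
      with c(2) weight show ?thesis by simp
    qed
  qed
  ultimately show ?thesis by simp
qed

section \<open>Numerical parameters\<close>

lemma ln_pow_mult_le:
  fixes a b c e :: real
  assumes "0 < a" "0 < b" "0 < c" "0 < e" "a ^ i * b ^ j \<le> c ^ k * e ^ l"
  shows "real i * ln a + real j * ln b \<le> real k * ln c + real l * ln e"
proof -
  have "ln (a ^ i * b ^ j) \<le> ln (c ^ k * e ^ l)" using assms by simp
  then show ?thesis using assms by (simp add: ln_mult ln_realpow)
qed

lemma binary_entropy_eleventh: "binary_entropy (1/11) \<le> 150/341 * ln 2"
proof -
  have "ln 5 + 11 * ln 11 \<le> ln 143 + 10 * ln (10::real)"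
    using ln_pow_mult_le[of 5 11 143 10 1 11 1 10] by simp
  moreover have "31 * ln 143 \<le> 150 * ln 2 + 31 * ln (5::real)"
    using ln_pow_mult_le[of 143 1 2 5 31 0 150 31] by simp
  moreover have "binary_entropy (1/11) = ln 11 - 10/11 * ln 10"
    by (simp add: binary_entropy_def ln_div algebra_simps)
  ultimately show ?thesis by simp
qed

lemma binary_entropy_twentieth: "binary_entropy (1/20) \<le> 23/80 * ln 2"
proof -
  have "ln 2 + 20 * ln 20 \<le> ln 107 + 19 * ln (19::real)"
    using ln_pow_mult_le[of 2 20 107 19 1 20 1 19] by simp
  moreover have "4 * ln 107 \<le> 27 * ln (2::real)"
    using ln_pow_mult_le[of 107 1 2 1 4 0 27 0] by simp
  moreover have "binary_entropy (1/20) = ln 20 - 19/20 * ln 19"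
    by (simp add: binary_entropy_def ln_div algebra_simps)
  ultimately show ?thesis by simp
qed

lemma real_div_bounds:
  assumes "0 < c"
  shows "real c * real (n div c) \<le> real n" "real n < real c * real (n div c) + real c"
proof -
  have "n = c * (n div c) + n mod c" "n mod c < c"
    using assms by simp_all
  then have "c * (n div c) \<le> n" "n < c * (n div c) + c"
    by linarith+
  then show "real c * real (n div c) \<le> real n" "real n < real c * real (n div c) + real c"
    by (simp_all flip: of_nat_mult of_nat_add)
qed

text \<open>The parameter \<alpha> is close to sqrt (p / (1 - p)), which balances the two terms of
  \<open>bump_eigenvalue\<close>.\<close>

lemma ln_card_le_entropy_eleventh:
  fixes F :: "(nat \<Rightarrow> bit) set"
  assumes sub: "f2.subspace F" and I: "finite I" and supp_I: "\<And>v. v \<in> F \<Longrightarrow> supp v \<subseteq> I"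
    and weight: "\<And>v. v \<in> F \<Longrightarrow> v \<noteq> 0 \<Longrightarrow> D \<le> card (supp v)"
    and m: "card I \<ge> 474479" and D: "real D \<ge> 427/2000 * real (card I)"
  shows "ln (card F) \<le> ln (2 * real D) + 150/341 * (real (card I) * ln 2) + 1000 * ln 10"
proof -
  define q where "q = card I div 11"
  have q: "11 * real q \<le> real (card I)" "real (card I) < 11 * real q + 11"
    using real_div_bounds[of 11 "card I"] by (simp_all add: q_def)
  have "real q + 1000 \<le> real (card I)"
    using q m by linarith
  then have "q + 1000 \<le> card I" by linarith
  have "real (card I) - 2 * real D + 1 \<le> 1996/999 * ((real (card I) - real q - 1000) * (1581/5000))"
    "real (card I) - 2 * real D + 1 \<le> 1996/999 * (real q / (1581/5000))"
    using q m D by (simp_all add: field_simps; linarith)+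
  then have "real (card I) - 2 * real D + 1 \<le> bump_eigenvalue (card I) q 1000 (1581/5000)"
    by (simp add: bump_eigenvalue_def min_def)
  then have "ln (card F) \<le> ln (2 * real D) + real (card I) * binary_entropy (1/11)
      + real (1000::nat) * ln ((1 - 1/11) / (1/11))"
    by (intro ln_card_linear_code_le[OF sub I supp_I weight]) (use \<open>q + 1000 \<le> card I\<close> q in auto)
  also have "real (card I) * binary_entropy (1/11) \<le> 150/341 * (real (card I) * ln 2)"
    using mult_left_mono[OF binary_entropy_eleventh, of "real (card I)"] by simp
  finally show ?thesis by simp
qed

lemma ln_card_le_entropy_twentieth:
  fixes F :: "(nat \<Rightarrow> bit) set"
  assumes sub: "f2.subspace F" and I: "finite I" and supp_I: "\<And>v. v \<in> F \<Longrightarrow> supp v \<subseteq> I"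
    and weight: "\<And>v. v \<in> F \<Longrightarrow> v \<noteq> 0 \<Longrightarrow> D \<le> card (supp v)"
    and m: "card I \<ge> 100000" and D: "real D \<ge> 2/7 * real (card I)"
  shows "ln (card F) \<le> ln (2 * real D) + 23/80 * (real (card I) * ln 2) + 1000 * ln 19"
proof -
  define q where "q = card I div 20"
  have q: "20 * real q \<le> real (card I)" "real (card I) < 20 * real q + 20"
    using real_div_bounds[of 20 "card I"] by (simp_all add: q_def)
  have "real q + 1000 \<le> real (card I)"
    using q m by linarith
  then have "q + 1000 \<le> card I" by linarith
  have "real (card I) - 2 * real D + 1 \<le> 1996/999 * ((real (card I) - real q - 1000) * (1147/5000))"
    "real (card I) - 2 * real D + 1 \<le> 1996/999 * (real q / (1147/5000))"
    using q m D by (simp_all add: field_simps; linarith)+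
  then have "real (card I) - 2 * real D + 1 \<le> bump_eigenvalue (card I) q 1000 (1147/5000)"
    by (simp add: bump_eigenvalue_def min_def)
  then have "ln (card F) \<le> ln (2 * real D) + real (card I) * binary_entropy (1/20)
      + real (1000::nat) * ln ((1 - 1/20) / (1/20))"
    by (intro ln_card_linear_code_le[OF sub I supp_I weight]) (use \<open>q + 1000 \<le> card I\<close> q in auto)
  also have "real (card I) * binary_entropy (1/20) \<le> 23/80 * (real (card I) * ln 2)"
    using mult_left_mono[OF binary_entropy_twentieth, of "real (card I)"] by simp
  finally show ?thesis by simp
qed

section \<open>Codes without focal families\<close>

lemma contains_focal4_if_disjoint_supports:
  assumes zero: "0 \<in> F" and y: "y1 \<in> F" "y2 \<in> F" "y3 \<in> F"
    and nonzero: "y1 \<noteq> 0" "y2 \<noteq> 0" "y3 \<noteq> 0"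
    and disjoint: "supp y1 \<inter> supp y2 = {}" "supp y1 \<inter> supp y3 = {}" "supp y2 \<inter> supp y3 = {}"
  shows "contains_focal4 n F"
proof -
  define x where "x j = (if j = 1 then y1 else if j = 2 then y2 else if j = 3 then y3 else 0)" for j :: nat
  have range: "{0..3::nat} = {0, 1, 2, 3}" by auto
  have "y1 \<noteq> y2" "y1 \<noteq> y3" "y2 \<noteq> y3"
    using nonzero disjoint by (metis Int_absorb supp_eq_empty_iff)+
  then have "inj_on x {0..3}"
    using nonzero unfolding range x_def inj_on_def by auto
  moreover have "x ` {0..3} \<subseteq> F"
    using zero y unfolding range x_def by auto
  moreover have "card {j \<in> {1, 2, 3}. x j i = x 0 i} \<ge> 2" for i
  proof -
    let ?A = "{j \<in> {1, 2, 3::nat}. x j i = x 0 i}"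
    have two: "2 \<le> card ?A" if "{a, b} \<subseteq> ?A" "a \<noteq> b" for a b
      using card_mono[OF _ that(1)] that(2) by simp
    have "y1 i = 0 \<or> y2 i = 0" "y1 i = 0 \<or> y3 i = 0" "y2 i = 0 \<or> y3 i = 0"
      using disjoint by (auto simp: supp_def)
    then consider "{2, 3} \<subseteq> ?A" | "{1, 3} \<subseteq> ?A" | "{1, 2} \<subseteq> ?A"
      by (auto simp: x_def)
    then show ?thesis
      by cases (erule two, simp)+
  qed
  ultimately show ?thesis
    unfolding contains_focal4_def focal_def by blast
qed

lemma dim_le_card_supp_Un_if_no_focal4:
  assumes sub: "f2.subspace F" and FC: "F \<subseteq> cube n" and no_focal: "\<not> contains_focal4 n F"
    and y: "y \<in> F" "y \<noteq> 0" and y2: "y2 \<in> F" "y2 \<noteq> 0" "\<forall>i\<in>supp y. y2 i = 0"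
  shows "f2.dim F \<le> card (supp y \<union> supp y2)"
proof (rule dim_le_card_if_meets[OF sub finite_subset[OF FC finite_cube]])
  show "finite (supp y \<union> supp y2)"
    using FC y(1) y2(1) supp_subset_cube by (meson finite_Un finite_nat_iff_bounded subsetD)
  show "supp v \<inter> (supp y \<union> supp y2) \<noteq> {}" if v: "v \<in> F" "v \<noteq> 0" for v
  proof
    assume "supp v \<inter> (supp y \<union> supp y2) = {}"
    moreover have "supp y \<inter> supp y2 = {}"
      using y2(3) by (auto simp: supp_def)
    ultimately have "contains_focal4 n F"
      by (intro contains_focal4_if_disjoint_supports[OF f2.subspace_0[OF sub] y(1) y2(1) v(1) y(2) y2(2) v(2)])
        blast+
    with no_focal show False ..
  qed
qed

lemma ln_card_le_if_light_codeword:
  fixes F :: "(nat \<Rightarrow> bit) set"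
  assumes sub: "f2.subspace F" and FC: "F \<subseteq> cube n" and no_focal: "\<not> contains_focal4 n F"
    and y: "y \<in> F" "y \<noteq> 0" and light: "real (card (supp y)) < 427/2000 * real n"
    and dim: "real (f2.dim F) \<ge> 11/25 * real n" and n: "n \<ge> 474479"
  shows "ln (card F) \<le> real (card (supp y)) * ln 2 + ln (2 * real n)
    + 23/80 * ((real n - real (card (supp y))) * ln 2) + 1000 * ln 19"
proof -
  define d where "d = card (supp y)"
  define K where "K = {v \<in> F. \<forall>i\<in>supp y. v i = 0}"
  define I where "I = {..<n} - supp y"
  have fin_F: "finite F" using finite_subset[OF FC finite_cube] .
  have supp_n: "supp v \<subseteq> {..<n}" if "v \<in> F" for v
    using that FC supp_subset_cube by blast
  have fin_y: "finite (supp y)" using finite_subset[OF supp_n[OF y(1)]] by simp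
  have card_I: "real (card I) = real n - real d"
    using supp_n[OF y(1)] card_mono[OF _ supp_n[OF y(1)]]
    by (simp add: I_def d_def card_Diff_subset fin_y of_nat_diff)
  have "\<exists>v\<in>K. v \<noteq> 0"
  proof (rule ccontr)
    assume "\<not> (\<exists>v\<in>K. v \<noteq> 0)"
    then have "supp v \<inter> supp y \<noteq> {}" if "v \<in> F" "v \<noteq> 0" for v
      using that by (auto simp: K_def supp_def)
    then have "f2.dim F \<le> d"
      unfolding d_def by (rule dim_le_card_if_meets[OF sub fin_F fin_y])
    with light dim show False by (simp add: d_def)
  qed
  then obtain y2 where y2: "y2 \<in> K" "y2 \<noteq> 0"
    and y2_min: "\<And>v. v \<in> K \<Longrightarrow> v \<noteq> 0 \<Longrightarrow> card (supp y2) \<le> card (supp v)"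
    using ex_has_least_nat[of "\<lambda>v. v \<in> K \<and> v \<noteq> 0" _ "\<lambda>v. card (supp v)"] by blast
  define d2 where "d2 = card (supp y2)"
  have "f2.dim F \<le> card (supp y \<union> supp y2)"
    using y2 by (intro dim_le_card_supp_Un_if_no_focal4[OF sub FC no_focal y]) (auto simp: K_def)
  also have "\<dots> \<le> d + d2"
    by (simp add: d_def d2_def card_Un_le)
  finally have dim_d2: "f2.dim F \<le> d + d2" .
  have "ln (card K) \<le> ln (2 * real d2) + 23/80 * (real (card I) * ln 2) + 1000 * ln 19"
    unfolding K_def
  proof (rule ln_card_le_entropy_twentieth[OF subspace_vanishing[OF sub]])
    show "finite I" by (simp add: I_def)
    show "supp v \<subseteq> I" if "v \<in> {v \<in> F. \<forall>i\<in>supp y. v i = 0}" for v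
      using that supp_n by (auto simp: I_def supp_def)
    show "d2 \<le> card (supp v)" if "v \<in> {v \<in> F. \<forall>i\<in>supp y. v i = 0}" "v \<noteq> 0" for v
      using y2_min that by (simp add: d2_def K_def)
    show "card I \<ge> 100000" "real d2 \<ge> 2/7 * real (card I)"
      using card_I light dim dim_d2 n by (simp_all add: d_def)
  qed
  also have "ln (2 * real d2) \<le> ln (2 * real n)"
  proof -
    have "supp y2 \<subseteq> {..<n}" "supp y2 \<noteq> {}"
      using y2 supp_n by (auto simp: K_def)
    then have "0 < d2" "d2 \<le> n"
      unfolding d2_def using card_mono[of "{..<n}" "supp y2"] finite_subset[of "supp y2" "{..<n}"]
      by (auto simp: card_gt_0_iff)
    then show ?thesis by simp
  qed
  moreover have "ln (card F) \<le> real d * ln 2 + ln (card K)"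
    using ln_card_le_shortening[OF sub fin_F fin_y] by (simp add: d_def K_def)
  ultimately show ?thesis
    using card_I by (simp add: d_def)
qed

lemma contains_focal4_if_dim_large:
  fixes F :: "(nat \<Rightarrow> bit) set"
  assumes FC: "F \<subseteq> cube n" and sub: "f2.subspace F" and dim: "real (f2.dim F) \<ge> 0.44 * real n"
    and n: "n \<ge> 474479"
    and asym10: "ln (2 * real n) + 1000 * ln 10 < real n * ln 2 / 8525"
    and asym19: "ln (2 * real n) + 1000 * ln 19 < 61/160000 * real n * ln 2"
  shows "contains_focal4 n F"
proof (rule ccontr)
  assume no_focal: "\<not> contains_focal4 n F"
  have fin_F: "finite F" using finite_subset[OF FC finite_cube] .
  have "(2::real) ^ f2.dim F \<le> real (card F)"
    using of_nat_mono[OF two_pow_dim_le_card[OF fin_F sub]] by (simp only: of_nat_power of_nat_numeral)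
  then have "ln (2 ^ f2.dim F) \<le> ln (card F)"
    by (rule ln_mono) simp
  then have dim_ln: "real (f2.dim F) * ln 2 \<le> ln (card F)"
    by (simp add: ln_realpow)
  have dim_n: "11/25 * (real n * ln 2) \<le> real (f2.dim F) * ln 2"
    using mult_right_mono[OF dim, of "ln 2"] by simp
  have "\<exists>v\<in>F. v \<noteq> 0"
  proof (rule ccontr)
    assume "\<not> (\<exists>v\<in>F. v \<noteq> 0)"
    then have "f2.dim F \<le> card ({} :: nat set)"
      by (intro dim_le_card_if_meets[OF sub fin_F]) auto
    with dim n show False by simp
  qed
  then obtain y where y: "y \<in> F" "y \<noteq> 0"
    and y_min: "\<And>v. v \<in> F \<Longrightarrow> v \<noteq> 0 \<Longrightarrow> card (supp y) \<le> card (supp v)"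
    using ex_has_least_nat[of "\<lambda>v. v \<in> F \<and> v \<noteq> 0" _ "\<lambda>v. card (supp v)"] by blast
  show False
  proof (cases "real (card (supp y)) \<ge> 427/2000 * real n")
    case True
    have "card (supp y) \<le> n"
      using card_mono[OF _ supp_subset_cube] y(1) FC by fastforce
    with True n have "ln (2 * real (card (supp y))) \<le> ln (2 * real n)"
      by simp
    moreover have "ln (card F) \<le> ln (2 * real (card (supp y))) + 150/341 * (real n * ln 2) + 1000 * ln 10"
      using ln_card_le_entropy_eleventh[OF sub _ supp_subset_cube y_min, of n] FC True n by auto
    ultimately have "ln (card F) \<le> ln (2 * real n) + 150/341 * (real n * ln 2) + 1000 * ln 10"
      by linarith
    then show False using dim_ln dim_n asym10 by linarith
  next
    case False
    then have light: "real (card (supp y)) * ln 2 \<le> 427/2000 * (real n * ln 2)"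
      using mult_right_mono[of "real (card (supp y))" "427/2000 * real n" "ln 2"] by simp
    have "ln (card F) \<le> real (card (supp y)) * ln 2 + ln (2 * real n)
      + 23/80 * ((real n - real (card (supp y))) * ln 2) + 1000 * ln 19"
      using False dim n by (intro ln_card_le_if_light_codeword[OF sub FC no_focal y]) auto
    moreover have "(real n - real (card (supp y))) * ln 2 = real n * ln 2 - real (card (supp y)) * ln 2"
      by (simp add: left_diff_distrib)
    ultimately show False using dim_ln dim_n light asym19 by linarith
  qed
qed

theorem corollary4p2:
  shows "\<exists>n0::nat. \<forall>n\<ge>n0. \<forall>F.
     F \<subseteq> cube n \<and> f2.subspace F \<and> real (f2.dim F) \<ge> 0.44 * real n
       \<longrightarrow> contains_focal4 n F"
proof -
  have "\<forall>\<^sub>F n in sequentially. n \<ge> 474479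
      \<and> ln (2 * real n) + 1000 * ln 10 < real n * ln 2 / 8525
      \<and> ln (2 * real n) + 1000 * ln 19 < 61/160000 * real n * ln 2"
    by (intro eventually_conj eventually_ge_at_top; real_asymp)
  then obtain n0 where "\<And>n. n \<ge> n0 \<Longrightarrow> n \<ge> 474479
      \<and> ln (2 * real n) + 1000 * ln 10 < real n * ln 2 / 8525
      \<and> ln (2 * real n) + 1000 * ln 19 < 61/160000 * real n * ln 2"
    by (auto simp: eventually_sequentially)
  then show ?thesis
    using contains_focal4_if_dim_large by blast
qed

end
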